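(* Let $r,n\ge1$ and let $q\ge0$ be a real parameter. Then for every $w\in W_{r,n}$, $$(rq+1)^{\ell_n(w)}=\sum_{j=0}^n\binom{q+n-j}{n}\phi^n_j(w),$$ where $\binom{x}{n}=\frac{x(x-1)\cdots(x-n+1)}{n!}$ is the generalized binomial coefficient.
   Context: $W_{r,n}=\mathbb{Z}_r\wr\mathfrak{S}_n$ is the group of $r$-colored permutations $w=w(1)^{c_1}\cdots w(n)^{c_n}$ ($w(1)\cdots w(n)\in\mathfrak S_n$, $c_i\in\{0,\dots,r-1\}$). $\ell_n(w)$ is the number of cycles of the permutation $w(1)\cdots w(n)$ whose color (sum mod $r$ of the colors $c_i$ of its entries) is $0$. Set $\chi^n_k(w)=(rk+1)^{\ell_n(w)}$ for integers $k\ge0$ and define the Foulkes characters $\phi^n_j=\sum_{i=0}^j(-1)^i\binom{n+1}{i}\chi^n_{j-i}$, $j=0,\dots,n$. *)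

theory Defs
  imports Complex_Main "HOL-Combinatorics.Permutations" "HOL-Combinatorics.Orbits"
begin

text \<open>An r-colored permutation of {1..n} is a pair (sigma, c): sigma a permutation
of {1..n}, c assigns to each entry i in {1..n} a colour c i in {0..r-1}
(and is 0 outside {1..n}, so the representation is unique).\<close>

definition colored_perms :: "nat \<Rightarrow> nat \<Rightarrow> ((nat \<Rightarrow> nat) \<times> (nat \<Rightarrow> nat)) set" where
  "colored_perms r n = {(\<sigma>, c). \<sigma> permutes {1..n} \<and> (\<forall>i\<in>{1..n}. c i < r)
                                 \<and> (\<forall>i. i \<notin> {1..n} \<longrightarrow> c i = 0)}"

definition perm_cycles :: "nat \<Rightarrow> (nat \<Rightarrow> nat) \<Rightarrow> nat set set" where
  "perm_cycles n \<sigma> = (\<lambda>i. orbit \<sigma> i) ` {1..n}"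

definition ell :: "nat \<Rightarrow> nat \<Rightarrow> (nat \<Rightarrow> nat) \<times> (nat \<Rightarrow> nat) \<Rightarrow> nat" where
  "ell r n w = card {C \<in> perm_cycles n (fst w). (\<Sum>i\<in>C. snd w i) mod r = 0}"

definition chi :: "nat \<Rightarrow> nat \<Rightarrow> nat \<Rightarrow> (nat \<Rightarrow> nat) \<times> (nat \<Rightarrow> nat) \<Rightarrow> real" where
  "chi r n k w = (real (r * k + 1)) ^ ell r n w"

definition foulkes :: "nat \<Rightarrow> nat \<Rightarrow> nat \<Rightarrow> (nat \<Rightarrow> nat) \<times> (nat \<Rightarrow> nat) \<Rightarrow> real" where
  "foulkes r n j w = (\<Sum>i=0..j. (-1) ^ i * real ((n + 1) choose i) * chi r n (j - i) w)"

end

theory Submission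
  imports Defs "HOL-Computational_Algebra.Computational_Algebra"
begin

text \<open>Since ell_n(w) \<le> n, both sides are polynomials of degree at most n in q, so it
suffices to compare them at q = m for m = 0, ..., n, where the claim reads
chi_m = sum_j C(m+n-j, n) phi_j. The Foulkes characters phi_j are the coefficients of
(1-t)^(n+1) sum_k chi_k t^k, and multiplying by (1-t)^-(n+1) = sum_k C(k+n, n) t^k recovers
the chi_m.\<close>

text \<open>The N-th backward difference of f, with f taken to vanish at negative arguments;
thus phi_j = backward_diff (n+1) chi j.\<close>
definition backward_diff :: "nat \<Rightarrow> (nat \<Rightarrow> 'a::comm_ring_1) \<Rightarrow> nat \<Rightarrow> 'a" where
  "backward_diff N f j = (\<Sum>i=0..j. (-1) ^ i * of_nat (N choose i) * f (j - i))"

lemma fps_nth_one_minus_X_times: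
  "((1 - fps_X) * G :: 'a::comm_ring_1 fps) $ k = G $ k - (if k = 0 then 0 else G $ (k - 1))"
  by (simp add: algebra_simps)

lemma fps_nth_one_minus_X_power:
  "((1 - fps_X) ^ N :: 'a::comm_ring_1 fps) $ i = (-1) ^ i * of_nat (N choose i)"
proof (induction N arbitrary: i)
  case 0
  then show ?case by (cases i) simp_all
next
  case (Suc N)
  then show ?case
    by (cases i) (simp_all add: fps_nth_one_minus_X_times algebra_simps)
qed

lemma one_minus_X_power_times_Abs_fps:
  "(1 - fps_X) ^ N * Abs_fps f = (Abs_fps (backward_diff N f) :: 'a::comm_ring_1 fps)"
  by (rule fps_ext) (simp add: fps_mult_nth fps_nth_one_minus_X_power backward_diff_def mult.assoc)

lemma one_minus_X_power_times_binomial_series: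
  "(1 - fps_X) ^ Suc n * Abs_fps (\<lambda>k. of_nat ((k + n) choose n)) = (1 :: 'a::comm_ring_1 fps)"
proof (induction n)
  case 0
  show ?case by (rule fps_ext) (simp add: fps_nth_one_minus_X_times)
next
  case (Suc n)
  have step: "(1 - fps_X) * Abs_fps (\<lambda>k. of_nat ((k + Suc n) choose Suc n))
          = (Abs_fps (\<lambda>k. of_nat ((k + n) choose n)) :: 'a fps)"
  proof (rule fps_ext)
    fix k
    show "((1 - fps_X) * Abs_fps (\<lambda>k. of_nat ((k + Suc n) choose Suc n))) $ k
            = (Abs_fps (\<lambda>k. of_nat ((k + n) choose n)) :: 'a fps) $ k"
    proof (cases k)
      case 0
      then show ?thesis by (simp add: fps_nth_one_minus_X_times binomial_eq_0[OF lessI])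
    next
      case (Suc k')
      then show ?thesis by (simp add: fps_nth_one_minus_X_times)
    qed
  qed
  with Suc.IH show ?case
    by (simp only: power_Suc2 mult.assoc)
qed

lemma backward_diff_inversion:
  "f m = (\<Sum>j=0..m. backward_diff (Suc n) f j * of_nat ((m - j + n) choose n))"
proof -
  define B :: "'a::comm_ring_1 fps" where "B = Abs_fps (\<lambda>k. of_nat ((k + n) choose n))"
  have "Abs_fps f = Abs_fps f * ((1 - fps_X) ^ Suc n * B)"
    by (simp only: B_def one_minus_X_power_times_binomial_series mult_1_right)
  also have "\<dots> = Abs_fps (backward_diff (Suc n) f) * B"
    by (simp only: one_minus_X_power_times_Abs_fps[symmetric] mult_ac)
  finally have "f m = (Abs_fps (backward_diff (Suc n) f) * B) $ m"
    by (metis fps_nth_Abs_fps)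
  then show ?thesis
    by (simp add: fps_mult_nth B_def)
qed

lemma backward_diff_inversion_le:
  assumes "m \<le> n"
  shows "f m = (\<Sum>j=0..n. of_nat ((m + n - j) choose n) * backward_diff (Suc n) f j)"
proof -
  have "f m = (\<Sum>j=0..m. backward_diff (Suc n) f j * of_nat ((m - j + n) choose n))"
    by (rule backward_diff_inversion)
  also have "\<dots> = (\<Sum>j=0..n. backward_diff (Suc n) f j * of_nat ((m + n - j) choose n))"
  proof (rule sum.mono_neutral_cong_left)
    show "\<forall>j\<in>{0..n} - {0..m}. backward_diff (Suc n) f j * of_nat ((m + n - j) choose n) = 0"
      by (auto simp: binomial_eq_0)
  qed (use assms in auto)
  finally show ?thesis
    by (simp only: mult.commute)
qed

definition gchoose_poly :: "'a::field_char_0 \<Rightarrow> nat \<Rightarrow> 'a poly" where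
  "gchoose_poly c n = smult (inverse (fact n)) (\<Prod>i<n. [:c - of_nat i, 1:])"

lemma poly_gchoose_poly: "poly (gchoose_poly c n) x = (x + c) gchoose n"
  by (simp add: gchoose_poly_def poly_prod gbinomial_prod_rev atLeast0LessThan
                field_simps)

lemma degree_gchoose_poly_le: "degree (gchoose_poly c n) \<le> n"
proof -
  have "degree (\<Prod>i<n. [:c - of_nat i, 1:]) \<le> (\<Sum>i<n. degree [:c - of_nat i, 1:])"
    using degree_prod_sum_le[of "{..<n}" "\<lambda>i. [:c - of_nat i, 1:]"] by (simp add: o_def)
  also have "\<dots> \<le> n" by simp
  finally show ?thesis by (simp add: gchoose_poly_def)
qed

lemma poly_eq_sum_gchoose_backward_diff:
  fixes p :: "'a::field_char_0 poly"
  assumes "degree p \<le> n"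
  shows "poly p x = (\<Sum>j=0..n. ((x + of_nat n - of_nat j) gchoose n)
                        * backward_diff (Suc n) (\<lambda>k. poly p (of_nat k)) j)"
proof -
  define d where "d = backward_diff (Suc n) (\<lambda>k. poly p (of_nat k))"
  define q where "q = (\<Sum>j=0..n. smult (d j) (gchoose_poly (of_nat n - of_nat j) n))"
  have poly_q: "poly q y = (\<Sum>j=0..n. ((y + of_nat n - of_nat j) gchoose n) * d j)" for y
    by (simp add: q_def poly_sum poly_gchoose_poly add_diff_eq mult.commute)
  have degree_q: "degree q \<le> n"
    unfolding q_def
    by (intro degree_sum_le order.trans[OF degree_smult_le] degree_gchoose_poly_le) simp
  have "poly p (of_nat m) = poly q (of_nat m)" if "m \<le> n" for m
  proof -
    have "poly p (of_nat m) = (\<Sum>j=0..n. of_nat ((m + n - j) choose n) * d j)"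
      unfolding d_def using that by (rule backward_diff_inversion_le)
    also have "\<dots> = poly q (of_nat m)"
      unfolding poly_q
    proof (intro sum.cong refl)
      fix j assume "j \<in> {0..n}"
      then have "of_nat m + of_nat n - of_nat j = (of_nat (m + n - j) :: 'a)"
        by (simp add: of_nat_diff)
      then show "of_nat ((m + n - j) choose n) * d j
                   = ((of_nat m + of_nat n - of_nat j) gchoose n) * d j"
        by (simp add: binomial_gbinomial)
    qed
    finally show ?thesis .
  qed
  moreover have "card (of_nat ` {0..n} :: 'a set) = Suc n"
    by (simp add: card_image inj_on_def)
  ultimately have "p = q"
    using assms degree_q by (intro poly_eqI_degree[of "of_nat ` {0..n}"]) auto
  then have "poly p x = poly q x"
    by simp
  also have "\<dots> = (\<Sum>j=0..n. ((x + of_nat n - of_nat j) gchoose n)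
                        * backward_diff (Suc n) (\<lambda>k. poly p (of_nat k)) j)"
    by (simp only: poly_q d_def)
  finally show ?thesis .
qed

lemma ell_le: "ell r n w \<le> n"
proof -
  have "ell r n w \<le> card (perm_cycles n (fst w))"
    unfolding ell_def perm_cycles_def by (intro card_mono) auto
  also have "\<dots> \<le> n"
    unfolding perm_cycles_def using card_image_le[of "{1..n}" "\<lambda>i. orbit (fst w) i"] by simp
  finally show ?thesis .
qed

theorem mainTheorem8:
  fixes r n :: nat and q :: real and w :: "(nat \<Rightarrow> nat) \<times> (nat \<Rightarrow> nat)"
  assumes "r \<ge> 1" and "n \<ge> 1" and "q \<ge> 0" and "w \<in> colored_perms r n"
  shows "(real r * q + 1) ^ ell r n w
           = (\<Sum>j=0..n. ((q + real n - real j) gchoose n) * foulkes r n j w)"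
proof -
  \<comment> \<open>None of the hypotheses is needed: the identity is polynomial in q, and ell r n w \<le> n for every w.\<close>
  define p :: "real poly" where "p = [:1, real r:] ^ ell r n w"
  have poly_p: "poly p x = (real r * x + 1) ^ ell r n w" for x
    by (simp add: p_def algebra_simps)
  have "degree p \<le> degree [:1, real r:] * ell r n w"
    unfolding p_def by (rule degree_power_le)
  also have "\<dots> \<le> ell r n w"
    by simp
  also have "\<dots> \<le> n"
    by (rule ell_le)
  finally have degree_p: "degree p \<le> n" .
  have foulkes_eq: "foulkes r n j w = backward_diff (Suc n) (\<lambda>k. poly p (real k)) j" for j
    by (simp add: foulkes_def backward_diff_def chi_def poly_p add.commute)
  have "(real r * q + 1) ^ ell r n w = poly p q"
    by (simp add: poly_p)
  also have "\<dots> = (\<Sum>j=0..n. ((q + real n - real j) gchoose n)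
                        * backward_diff (Suc n) (\<lambda>k. poly p (real k)) j)"
    using degree_p by (rule poly_eq_sum_gchoose_backward_diff)
  also have "\<dots> = (\<Sum>j=0..n. ((q + real n - real j) gchoose n) * foulkes r n j w)"
    by (simp only: foulkes_eq)
  finally show ?thesis .
qed

end
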